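(* Let $p$ be an odd prime and let $\chi, r \in \mathbb{F}_{p^2}^\times$ with $\chi \neq \pm 1$, where the multiplicative order of $\chi$ divides $p+1$, and the multiplicative order of $r$ divides $2(p+1)$ but does not divide $p+1$. Then there exist $b_1, b_2, k \in \mathbb{F}_p$ with $k$ a quadratic nonresidue such that $\chi - \chi^{-1} = b_1\sqrt{k}$ and $r + r^{-1} = b_2\sqrt{k}$. Moreover, with these choices of $\chi$ and $r$, the set $$\left\{ \left( \chi + \chi^{-1},\ \frac{\chi + \chi^{-1}}{\chi - \chi^{-1}}\left(r\chi^\ell + \frac{1}{r\chi^\ell}\right),\ \frac{\chi + \chi^{-1}}{\chi - \chi^{-1}}\left(r\chi^{\ell + 1} + \frac{1}{r\chi^{\ell + 1}}\right)\right) : \ell \in \mathbb{Z} \right\}$$ contains triples with all coordinates in $\mathbb{F}_p = \mathbb{Z}/p\mathbb{Z}$.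
   Context: $\sqrt{k}$ denotes a fixed square root of $k$ in $\mathbb{F}_{p^2}$, and $\mathbb{F}_p$ is regarded as the prime subfield of $\mathbb{F}_{p^2}$. *)

theory Defs
  imports Main "HOL-Computational_Algebra.Primes"
begin

definition mult_order :: "'a::field \<Rightarrow> nat" where
  "mult_order x = (if \<exists>n>0. x ^ n = 1 then (LEAST n. n > 0 \<and> x ^ n = 1) else 0)"

definition prime_subfield :: "'a::field set" where
  "prime_subfield = range of_int"

definition qnr_prime_subfield :: "'a::field \<Rightarrow> bool" where
  "qnr_prime_subfield k \<longleftrightarrow> k \<in> prime_subfield \<and> k \<noteq> 0 \<and>
     \<not> (\<exists>y\<in>prime_subfield. y ^ 2 = k)"

definition triple_set :: "'a::field \<Rightarrow> 'a \<Rightarrow> ('a \<times> 'a \<times> 'a) set" where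
  "triple_set \<chi> r =
    (\<lambda>l::int. (\<chi> + inverse \<chi>,
       (\<chi> + inverse \<chi>) / (\<chi> - inverse \<chi>) * (r * \<chi> powi l + inverse (r * \<chi> powi l)),
       (\<chi> + inverse \<chi>) / (\<chi> - inverse \<chi>) * (r * \<chi> powi (l + 1) + inverse (r * \<chi> powi (l + 1)))))
    ` UNIV"

end

theory Submission
  imports Defs "HOL-Computational_Algebra.Polynomial" "HOL-Number_Theory.Cong"
begin

(* The Frobenius map x \<mapsto> x ^ p fixes exactly the prime subfield, the roots of X ^ p - X.
   The order hypotheses say \<chi> ^ p = \<chi>\<^sup>-\<^sup>1 and r ^ p = - r\<^sup>-\<^sup>1, so Frobenius fixes
   \<chi> + \<chi>\<^sup>-\<^sup>1 and negates d = \<chi> - \<chi>\<^sup>-\<^sup>1, r + r\<^sup>-\<^sup>1 and r \<chi> + (r \<chi>)\<^sup>-\<^sup>1. Quotients of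
   negated elements are fixed, and d\<^sup>2 is fixed but not a square in the prime subfield,
   since its square roots \<plusminus>d are not fixed when p is odd. Hence k = d\<^sup>2 and s = d work,
   and the triple with \<ell> = 0 lies in the prime subfield. *)

lemma power_CHAR_add:
  "prime CHAR('a::comm_ring_1) \<Longrightarrow> (x + y :: 'a) ^ CHAR('a) = x ^ CHAR('a) + y ^ CHAR('a)"
  by (rule freshmans_dream) auto

lemma power_CHAR_minus:
  "prime CHAR('a::comm_ring_1) \<Longrightarrow> (- x :: 'a) ^ CHAR('a) = - (x ^ CHAR('a))"
  by (rule minus_power_prime_CHAR) auto

lemma power_CHAR_diff:
  "prime CHAR('a::comm_ring_1) \<Longrightarrow> (x - y :: 'a) ^ CHAR('a) = x ^ CHAR('a) - y ^ CHAR('a)"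
  using power_CHAR_add[of x "- y"] power_CHAR_minus[of y] by simp

lemma of_nat_power_CHAR:
  assumes "prime CHAR('a::comm_ring_1)"
  shows "(of_nat n :: 'a) ^ CHAR('a) = of_nat n"
proof (induction n)
  case 0
  then show ?case using assms prime_gt_0_nat by (simp add: power_0_left)
next
  case (Suc n)
  then show ?case using power_CHAR_add[OF assms, of "of_nat n" 1] by (simp add: add.commute)
qed

lemma prime_subfield_eq_of_nat_lessThan_CHAR:
  assumes "CHAR('a::field) > 0"
  shows "(prime_subfield :: 'a set) = of_nat ` {..<CHAR('a)}"
  unfolding prime_subfield_def
proof safe
  fix i :: int
  have "(of_int i :: 'a) = of_nat (nat (i mod int CHAR('a)))"
    using assms by (simp add: of_int_eq_iff_cong_CHAR cong_def)
  moreover have "nat (i mod int CHAR('a)) < CHAR('a)"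
    using assms by (simp add: nat_less_iff)
  ultimately show "(of_int i :: 'a) \<in> of_nat ` {..<CHAR('a)}"
    by blast
next
  fix n
  show "(of_nat n :: 'a) \<in> range of_int"
    by (metis of_int_of_nat_eq rangeI)
qed

lemma card_prime_subfield:
  assumes "CHAR('a::field) > 0"
  shows "card (prime_subfield :: 'a set) = CHAR('a)"
proof -
  have "inj_on (of_nat :: nat \<Rightarrow> 'a) {..<CHAR('a)}"
    by (auto simp: inj_on_def of_nat_eq_iff_cong_CHAR cong_def)
  then show ?thesis
    using prime_subfield_eq_of_nat_lessThan_CHAR[OF assms] card_image by fastforce
qed

lemma prime_subfield_iff_power_CHAR:
  assumes prime: "prime CHAR('a::field)"
  shows "(x :: 'a) \<in> prime_subfield \<longleftrightarrow> x ^ CHAR('a) = x"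
proof -
  have CHAR_ge_2: "CHAR('a) \<ge> 2"
    using prime prime_ge_2_nat by blast
  define P :: "'a poly" where "P = monom 1 CHAR('a) + [:0, -1:]"
  have poly_P: "poly P y = y ^ CHAR('a) - y" for y
    by (simp add: P_def poly_monom)
  have "degree P = CHAR('a)"
    unfolding P_def using CHAR_ge_2 by (subst degree_add_eq_left) (auto simp: degree_monom_eq)
  moreover from this have "P \<noteq> 0"
    using CHAR_ge_2 by auto
  ultimately have roots_bound: "card {y. poly P y = 0} \<le> CHAR('a)"
    using card_poly_roots_bound[of P] by simp
  have fixed_points: "prime_subfield = {y :: 'a. poly P y = 0}"
  proof (rule card_subset_eq)
    show "finite {y. poly P y = 0}"
      using \<open>P \<noteq> 0\<close> poly_roots_finite by blast
    show subset: "prime_subfield \<subseteq> {y. poly P y = 0}"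
    proof
      fix y :: 'a
      assume "y \<in> prime_subfield"
      then obtain n where "y = of_nat n"
        using prime_subfield_eq_of_nat_lessThan_CHAR[where 'a='a] CHAR_ge_2 by auto
      then show "y \<in> {y. poly P y = 0}"
        using of_nat_power_CHAR[OF prime] poly_P by simp
    qed
    show "card (prime_subfield :: 'a set) = card {y. poly P y = 0}"
      using card_mono[OF \<open>finite _\<close> subset] card_prime_subfield[where 'a='a] CHAR_ge_2
        roots_bound by simp
  qed
  show ?thesis
    by (simp add: fixed_points poly_P)
qed

lemma mult_order_dvd_iff_power_eq_1:
  assumes "n > 0"
  shows "mult_order (x::'a::field) dvd n \<longleftrightarrow> x ^ n = 1"
proof (cases "\<exists>m>0. x ^ m = 1")
  case True
  define m where "m = mult_order x"
  have m_Least: "m = (LEAST m. m > 0 \<and> x ^ m = 1)"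
    using True by (simp add: m_def mult_order_def)
  have m: "m > 0" "x ^ m = 1"
    unfolding m_Least using LeastI_ex[OF True] by simp_all
  have "x ^ n = x ^ (n mod m)"
    by (metis m(2) mod_mult_div_eq mult.commute power_add power_mult power_one mult_1_right)
  moreover have "n mod m = 0" if "x ^ (n mod m) = 1"
  proof (rule ccontr)
    assume "n mod m \<noteq> 0"
    then have "(LEAST m. m > 0 \<and> x ^ m = 1) \<le> n mod m"
      using that by (intro Least_le) simp
    then show False
      using mod_less_divisor[OF m(1), of n] m_Least by simp
  qed
  ultimately show ?thesis
    using m_def by (auto simp: mod_eq_0_iff_dvd)
next
  case False
  then have "mult_order x = 0"
    unfolding mult_order_def by (rule if_not_P)
  moreover have "x ^ n \<noteq> 1"
    using False assms by blast
  ultimately show ?thesis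
    using assms by simp
qed

lemma power_eq_minus_1_if_mult_order_dvd_double:
  fixes x :: "'a::field"
  assumes "n > 0" "mult_order x dvd 2 * n" "\<not> mult_order x dvd n"
  shows "x ^ n = -1"
proof -
  have "(x ^ n) ^ 2 = x ^ (2 * n)"
    by (simp add: power_mult mult.commute)
  also have "\<dots> = 1"
    using assms by (simp add: mult_order_dvd_iff_power_eq_1)
  finally have "(x ^ n) ^ 2 = 1" .
  moreover have "x ^ n \<noteq> 1"
    using assms by (simp add: mult_order_dvd_iff_power_eq_1)
  ultimately show ?thesis
    by (simp add: power2_eq_1_iff)
qed

lemma power_CHAR_add_diff_inverse_if_power_CHAR_eq_inverse:
  fixes u :: "'a::field"
  assumes "prime CHAR('a)" "u ^ CHAR('a) = inverse u"
  shows "(u + inverse u) ^ CHAR('a) = u + inverse u"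
    and "(u - inverse u) ^ CHAR('a) = - (u - inverse u)"
  by (simp_all add: assms power_CHAR_add power_CHAR_diff power_inverse)

lemma power_CHAR_add_inverse_if_power_CHAR_eq_minus_inverse:
  fixes v :: "'a::field"
  assumes "prime CHAR('a)" "v ^ CHAR('a) = - inverse v"
  shows "(v + inverse v) ^ CHAR('a) = - (v + inverse v)"
  by (simp add: assms power_CHAR_add power_inverse inverse_minus_eq)

lemma qnr_prime_subfield_square_if_power_CHAR_eq_minus:
  fixes d :: "'a::field"
  assumes prime: "prime CHAR('a)" and odd: "odd CHAR('a)"
    and "d \<noteq> 0" and d_CHAR: "d ^ CHAR('a) = - d"
  shows "qnr_prime_subfield (d ^ 2)"
  unfolding qnr_prime_subfield_def
proof (intro conjI)
  have "(d ^ 2) ^ CHAR('a) = (d ^ CHAR('a)) ^ 2"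
    by (metis power_mult mult.commute)
  then show "d ^ 2 \<in> prime_subfield"
    using prime d_CHAR by (simp add: prime_subfield_iff_power_CHAR)
  show "d ^ 2 \<noteq> 0"
    using \<open>d \<noteq> 0\<close> by simp
  have "\<not> CHAR('a) dvd 2"
    using odd prime_ge_2_nat[OF prime] dvd_imp_le[of "CHAR('a)" 2] by auto
  then have two: "(2 :: 'a) \<noteq> 0"
    using of_nat_eq_0_iff_char_dvd[of 2, where 'a='a] by simp
  show "\<not> (\<exists>y\<in>prime_subfield. y ^ 2 = d ^ 2)"
  proof
    assume "\<exists>y\<in>prime_subfield. y ^ 2 = d ^ 2"
    then have "d ^ CHAR('a) = d"
      using prime power_CHAR_minus[OF prime, of d]
      by (auto simp: prime_subfield_iff_power_CHAR power2_eq_iff)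
    with d_CHAR have "2 * d = 0"
      by (metis mult_2 neg_eq_iff_add_eq_0)
    with \<open>d \<noteq> 0\<close> two show False
      by simp
  qed
qed

lemma ex_qnr_sqrt_multiples_if_power_CHAR_eq_minus:
  fixes x y :: "'a::field"
  assumes prime: "prime CHAR('a)" and "odd CHAR('a)"
    and "x \<noteq> 0" "x ^ CHAR('a) = - x" "y ^ CHAR('a) = - y"
  shows "\<exists>b1 b2 k s. b1 \<in> prime_subfield \<and> b2 \<in> prime_subfield \<and>
           qnr_prime_subfield k \<and> s ^ 2 = k \<and> x = b1 * s \<and> y = b2 * s"
proof (intro exI conjI)
  show "(1::'a) \<in> prime_subfield" and "y / x \<in> prime_subfield"
    using assms by (simp_all add: prime_subfield_iff_power_CHAR power_divide)
  show "qnr_prime_subfield (x ^ 2)"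
    using qnr_prime_subfield_square_if_power_CHAR_eq_minus assms by blast
  show "x = 1 * x" and "y = y / x * x"
    using \<open>x \<noteq> 0\<close> by simp_all
qed simp

theorem corollary1:
  fixes \<chi> r :: "'a::{field,finite}"
  assumes "prime (p::nat)" and "odd p"
    and "card (UNIV :: 'a set) = p ^ 2" and "CHAR('a) = p"
    and "\<chi> \<noteq> 0" and "r \<noteq> 0"
    and "\<chi> \<noteq> 1" and "\<chi> \<noteq> -1"
    and "mult_order \<chi> dvd p + 1"
    and "mult_order r dvd 2 * (p + 1)" and "\<not> mult_order r dvd p + 1"
  shows "(\<exists>b1 b2 k s. b1 \<in> prime_subfield \<and> b2 \<in> prime_subfield \<and>
            qnr_prime_subfield k \<and> s ^ 2 = k \<and>
            \<chi> - inverse \<chi> = b1 * s \<and> r + inverse r = b2 * s)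
       \<and> triple_set \<chi> r \<inter> (prime_subfield \<times> prime_subfield \<times> prime_subfield) \<noteq> {}"
proof -
  note CHAR = assms(4)[symmetric]
  have prime: "prime CHAR('a)" and odd: "odd CHAR('a)"
    using assms(1,2) CHAR by simp_all
  have \<chi>_CHAR: "\<chi> ^ p = inverse \<chi>"
    using assms(5,9) mult_order_dvd_iff_power_eq_1[of "p + 1" \<chi>] by (simp add: field_simps)
  have r_CHAR: "r ^ p = - inverse r"
    using assms(6,10,11) power_eq_minus_1_if_mult_order_dvd_double[of "p + 1" r]
    by (simp add: field_simps)
  define c d e f where "c = \<chi> + inverse \<chi>" and "d = \<chi> - inverse \<chi>"
    and "e = r + inverse r" and "f = r * \<chi> + inverse (r * \<chi>)"
  have r\<chi>_CHAR: "(r * \<chi>) ^ p = - inverse (r * \<chi>)"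
    using \<chi>_CHAR r_CHAR by (simp add: power_mult_distrib)
  have c_CHAR: "c ^ p = c" and d_CHAR: "d ^ p = - d"
    and e_CHAR: "e ^ p = - e" and f_CHAR: "f ^ p = - f"
    unfolding c_def d_def e_def f_def CHAR
    using power_CHAR_add_diff_inverse_if_power_CHAR_eq_inverse[OF prime]
      power_CHAR_add_inverse_if_power_CHAR_eq_minus_inverse[OF prime]
      \<chi>_CHAR r_CHAR r\<chi>_CHAR
    by (simp_all only: CHAR)
  have "d \<noteq> 0"
    using assms(5,7,8)
    by (auto simp: d_def field_simps power2_eq_1_iff simp flip: power2_eq_square)
  then have "\<exists>b1 b2 k s. b1 \<in> prime_subfield \<and> b2 \<in> prime_subfield \<and>
      qnr_prime_subfield k \<and> s ^ 2 = k \<and> \<chi> - inverse \<chi> = b1 * s \<and> r + inverse r = b2 * s"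
    using ex_qnr_sqrt_multiples_if_power_CHAR_eq_minus[OF prime odd, of d e] d_CHAR e_CHAR
    unfolding CHAR d_def e_def by blast
  moreover have "(c, c / d * e, c / d * f) \<in> triple_set \<chi> r"
    unfolding triple_set_def c_def d_def e_def f_def by (rule image_eqI[of _ _ 0]) auto
  moreover have "(c, c / d * e, c / d * f) \<in> prime_subfield \<times> prime_subfield \<times> prime_subfield"
    using prime c_CHAR d_CHAR e_CHAR f_CHAR
    by (simp add: prime_subfield_iff_power_CHAR CHAR power_mult_distrib power_divide)
  ultimately show ?thesis
    by blast
qed

end
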